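(* Let $w_1,\dots,w_k\in\mathbb{R}^n$ be unit vectors, $f(x)=\bigwedge_{i=1}^k\mathrm{sign}(w_i\cdot x)$, and $\rho>0$. Let $\mathbf{P},\mathbf{N}$ be finite subsets of the unit sphere $\mathbb{S}^{n-1}$ with $f(x)=1$ for all $x\in\mathbf{P}$, and let \[\mathcal{H}=\{w\in\mathbb{R}^{n+1}:\|w\|_2\le1,\ w\cdot(x,1)\ge0\ \forall x\in\mathbf{P},\ w\cdot(x,1)\le0\ \forall x\in\mathbf{N}\}.\] If $w_1\cdot x<-\rho$ for all $x\in\mathbf{N}$, then \[|\mathcal{H}|\ge\left(\frac{\rho}{3(1+\rho)}\right)^{n+1}|B_2^n|,\] where $|\cdot|$ denotes Lebesgue volume (in the respective dimension) and $B_2^n=\{w\in\mathbb{R}^n:\|w\|_2\le1\}$. Moreover, $\mathcal{H}$ contains a ball of radius $\frac{\rho}{6(1+\rho)}$.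
   Context: $f(x)=1$ iff $w_i\cdot x>0$ for all $i\in[k]$, and $f(x)=-1$ otherwise. *)

theory Defs
  imports "HOL-Analysis.Analysis"
begin

definition halfspace_intersection :: "(nat \<Rightarrow> 'a::real_inner) \<Rightarrow> nat \<Rightarrow> 'a \<Rightarrow> int" where
  "halfspace_intersection w k x = (if (\<forall>i\<in>{1..k}. w i \<bullet> x > 0) then 1 else -1)"

text \<open>The version space H in R^{n+1}, with R^{n+1} represented as 'a \<times> real;
  w . (x,1) is the inner product on the product type.\<close>
definition version_space :: "'a::euclidean_space set \<Rightarrow> 'a set \<Rightarrow> ('a \<times> real) set" where
  "version_space P N = {w. norm w \<le> 1 \<and> (\<forall>x\<in>P. w \<bullet> (x, 1) \<ge> 0) \<and> (\<forall>x\<in>N. w \<bullet> (x, 1) \<le> 0)}"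

end

theory Submission
  imports Defs
begin

text \<open>
  Scale the first normal down to \<open>c = w\<^sub>1 / (1 + \<rho>)\<close> and put \<open>q = \<rho> / (3 (1 + \<rho>))\<close>, so that
  \<open>\<parallel>c\<parallel> + 3q = 1\<close> and \<open>c \<bullet> x \<le> -3q\<close> on \<open>N\<close>, while \<open>c \<bullet> x \<ge> 0\<close> on \<open>P\<close>. Perturbing \<open>c\<close> by at
  most \<open>q\<close> changes \<open>c \<bullet> x\<close> by at most \<open>q\<close> on the unit sphere, so every \<open>(y, t)\<close> with
  \<open>\<parallel>y - c\<parallel> \<le> q\<close> and \<open>q \<le> t \<le> 2q\<close> lies in the version space. This cylinder has volume
  \<open>q\<^sup>n |B\<^sub>2\<^sup>n| \<cdot> q\<close> and contains the ball of radius \<open>q/2\<close> around \<open>(c, 3q/2)\<close>.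
\<close>

lemma halfspace_intersection_eq_1_iff:
  "halfspace_intersection w k x = 1 \<longleftrightarrow> (\<forall>i\<in>{1..k}. 0 < w i \<bullet> x)"
  by (simp add: halfspace_intersection_def)

lemma compact_version_space: "compact (version_space P N)"
proof -
  have "version_space P N =
      cball 0 1 \<inter> (\<Inter>x\<in>P. {z. 0 \<le> z \<bullet> (x, 1)}) \<inter> (\<Inter>x\<in>N. {z. z \<bullet> (x, 1) \<le> 0})"
    by (auto simp: version_space_def)
  moreover have "closed {z. 0 \<le> z \<bullet> c}" "closed {z. z \<bullet> c \<le> 0}" for c :: "'a \<times> real"
    by (intro closed_Collect_le continuous_intros)+
  ultimately show ?thesis
    by (simp add: compact_Int_closed closed_INT closed_Int)
qed

lemma measure_lborel_Times:
  fixes A :: "'a::euclidean_space set" and B :: "'b::euclidean_space set"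
  assumes "A \<in> sets lborel" "B \<in> sets lborel"
  shows "measure lborel (A \<times> B) = measure lborel A * measure lborel B"
proof -
  have "emeasure lborel (A \<times> B) = emeasure (lborel \<Otimes>\<^sub>M lborel) (A \<times> B)"
    by (simp add: lborel_prod)
  also have "\<dots> = emeasure lborel A * emeasure lborel B"
    using assms by (simp add: lborel.emeasure_pair_measure_Times)
  finally show ?thesis
    by (simp add: measure_def enn2real_mult)
qed

lemma cylinder_subset_version_space:
  fixes v :: "'a::euclidean_space" and \<rho> :: real
  assumes "norm v \<le> 1" "\<rho> \<ge> 0" "P \<subseteq> cball 0 1" "N \<subseteq> cball 0 1"
    and "\<forall>x\<in>P. 0 \<le> v \<bullet> x" "\<forall>x\<in>N. v \<bullet> x \<le> - \<rho>"
  defines "q \<equiv> \<rho> / (3 * (1 + \<rho>))"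
  shows "cball (v /\<^sub>R (1 + \<rho>)) q \<times> {q..2 * q} \<subseteq> version_space P N"
proof clarify
  fix y t
  assume y: "y \<in> cball (v /\<^sub>R (1 + \<rho>)) q" and t: "t \<in> {q..2 * q}"
  define s where "s = 1 / (1 + \<rho>)"
  have "1 + \<rho> > 0"
    using \<open>\<rho> \<ge> 0\<close> by simp
  moreover have "3 * q = \<rho> / (1 + \<rho>)"
    using calculation by (simp add: q_def field_simps)
  ultimately have s: "s \<ge> 0" "s + 3 * q = 1" "s * \<rho> = 3 * q"
    by (simp_all add: s_def field_simps)
  have c: "v /\<^sub>R (1 + \<rho>) = s *\<^sub>R v"
    by (simp add: s_def divide_inverse_commute)
  have "norm y \<le> norm (s *\<^sub>R v) + norm (y - s *\<^sub>R v)"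
    by (metis norm_triangle_sub)
  also have "\<dots> \<le> s + q"
    using y s(1) \<open>norm v \<le> 1\<close> c
    by (intro add_mono) (auto simp: dist_norm norm_minus_commute mult_left_le)
  finally have "norm (y, t) \<le> 1"
    using norm_Pair_le[of y t] t s(2) by auto
  have inner_y: "s * (v \<bullet> x) - q \<le> y \<bullet> x \<and> y \<bullet> x \<le> s * (v \<bullet> x) + q" if "norm x \<le> 1" for x
  proof -
    have "\<bar>(y - s *\<^sub>R v) \<bullet> x\<bar> \<le> norm (y - s *\<^sub>R v) * norm x"
      by (rule Cauchy_Schwarz_ineq2)
    also have "\<dots> \<le> norm (y - s *\<^sub>R v)"
      using that by (simp add: mult_left_le)
    also have "\<dots> \<le> q"
      using y c by (simp add: dist_norm norm_minus_commute)
    finally show ?thesis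
      by (simp add: inner_diff_left abs_le_iff)
  qed
  have "0 \<le> (y, t) \<bullet> (x, 1)" if "x \<in> P" for x
  proof -
    have "0 \<le> s * (v \<bullet> x)" using that assms(5) s(1) by simp
    then show ?thesis using inner_y[of x] that assms(3) t by auto
  qed
  moreover have "(y, t) \<bullet> (x, 1) \<le> 0" if "x \<in> N" for x
  proof -
    have "s * (v \<bullet> x) \<le> - (s * \<rho>)"
      using mult_left_mono[OF assms(6)[rule_format, OF that] s(1)] by simp
    then show ?thesis using inner_y[of x] that assms(4) t s(3) by auto
  qed
  ultimately show "(y, t) \<in> version_space P N"
    using \<open>norm (y, t) \<le> 1\<close> by (simp add: version_space_def)
qed

lemma cball_Pair_subset_Times:
  fixes t :: real
  shows "cball (a, t) r \<subseteq> cball a r \<times> {t - r..t + r}"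
proof clarify
  fix y u assume "(y, u) \<in> cball (a, t) r"
  then have "dist a y \<le> r" "dist t u \<le> r"
    using dist_fst_le[of "(a, t)" "(y, u)"] dist_snd_le[of "(a, t)" "(y, u)"] by auto
  then show "y \<in> cball a r \<and> u \<in> {t - r..t + r}"
    by (auto simp: dist_real_def)
qed

theorem lemma3p3:
  fixes w :: "nat \<Rightarrow> 'a::euclidean_space" and k :: nat and \<rho> :: real
    and P N :: "'a set"
  assumes "k \<ge> 1"
    and "\<forall>i\<in>{1..k}. norm (w i) = 1"
    and "\<rho> > 0"
    and "finite P" and "P \<subseteq> sphere 0 1"
    and "finite N" and "N \<subseteq> sphere 0 1"
    and "\<forall>x\<in>P. halfspace_intersection w k x = 1"
    and "\<forall>x\<in>N. w 1 \<bullet> x < - \<rho>"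
  shows "measure lborel (version_space P N)
           \<ge> (\<rho> / (3 * (1 + \<rho>))) ^ (DIM('a) + 1) * measure lborel (cball (0::'a) 1)
         \<and> (\<exists>c. cball c (\<rho> / (6 * (1 + \<rho>))) \<subseteq> version_space P N)"
proof -
  define q where "q = \<rho> / (3 * (1 + \<rho>))"
  define c where "c = w 1 /\<^sub>R (1 + \<rho>)"
  have "q > 0"
    using \<open>\<rho> > 0\<close> by (simp add: q_def)
  have "\<forall>x\<in>P. 0 \<le> w 1 \<bullet> x"
    using assms(1,8) by (auto simp: halfspace_intersection_eq_1_iff less_imp_le)
  then have cylinder: "cball c q \<times> {q..2 * q} \<subseteq> version_space P N"
    unfolding c_def q_def
    using assms(1-3,5,7,9) by (intro cylinder_subset_version_space) (auto simp: less_imp_le)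
  have "q ^ (DIM('a) + 1) * measure lborel (cball (0::'a) 1)
      = measure lborel (cball c q \<times> {q..2 * q})"
    using \<open>q > 0\<close> by (simp add: measure_lborel_Times content_cball)
  also have "\<dots> \<le> measure lborel (version_space P N)"
    using cylinder compact_version_space
    by (intro measure_mono_fmeasurable fmeasurable_compact) (auto intro: borel_closed closed_Times)
  finally have volume:
    "q ^ (DIM('a) + 1) * measure lborel (cball (0::'a) 1) \<le> measure lborel (version_space P N)" .
  have "cball (c, 3 * q / 2) (q / 2) \<subseteq> cball c (q / 2) \<times> {q..2 * q}"
    using cball_Pair_subset_Times[of c "3 * q / 2" "q / 2"] by simp
  also have "\<dots> \<subseteq> cball c q \<times> {q..2 * q}"
    using \<open>q > 0\<close> by (intro Sigma_mono) auto
  also note cylinder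
  finally have "cball (c, 3 * q / 2) (q / 2) \<subseteq> version_space P N" .
  moreover have "\<rho> / (6 * (1 + \<rho>)) = q / 2"
    by (simp add: q_def)
  ultimately show ?thesis
    using volume unfolding q_def[symmetric] by metis
qed

end
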